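(* Let $R$ be a ring whose only idempotents are $0$ and $1$. Then $R$ is a GSWNC ring if and only if $R$ is a local ring whose Jacobson radical $J(R)$ is nil.
   Context: All rings are associative with identity. An element $a$ of a ring is strongly weakly nil-clean if there exist an idempotent $e$ and a nilpotent $q$ with $eq = qe$ such that $a = q + e$ or $a = q - e$. A ring is GSWNC if every non-invertible element is strongly weakly nil-clean. *)

theory Defs
  imports Main
begin

definition is_idem :: "'a::ring_1 \<Rightarrow> bool" where
  "is_idem e \<longleftrightarrow> e * e = e"

definition is_nilp :: "'a::ring_1 \<Rightarrow> bool" where
  "is_nilp q \<longleftrightarrow> (\<exists>n::nat. q ^ n = 0)"

definition is_unit :: "'a::ring_1 \<Rightarrow> bool" where
  "is_unit a \<longleftrightarrow> (\<exists>b. a * b = 1 \<and> b * a = 1)"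

definition strongly_weakly_nil_clean :: "'a::ring_1 \<Rightarrow> bool" where
  "strongly_weakly_nil_clean a \<longleftrightarrow>
     (\<exists>e q. is_idem e \<and> is_nilp q \<and> e * q = q * e \<and> (a = q + e \<or> a = q - e))"

definition GSWNC :: "'a::ring_1 itself \<Rightarrow> bool" where
  "GSWNC (_ :: 'a itself) \<longleftrightarrow>
     (\<forall>a::'a. \<not> is_unit a \<longrightarrow> strongly_weakly_nil_clean a)"

definition left_ideal :: "'a::ring_1 set \<Rightarrow> bool" where
  "left_ideal I \<longleftrightarrow> 0 \<in> I \<and> (\<forall>a\<in>I. \<forall>b\<in>I. a + b \<in> I) \<and> (\<forall>a\<in>I. - a \<in> I)
     \<and> (\<forall>r. \<forall>a\<in>I. r * a \<in> I)"

definition maximal_left_ideal :: "'a::ring_1 set \<Rightarrow> bool" where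
  "maximal_left_ideal I \<longleftrightarrow> left_ideal I \<and> I \<noteq> UNIV \<and>
     (\<forall>K. left_ideal K \<and> I \<subseteq> K \<and> K \<noteq> UNIV \<longrightarrow> K = I)"

definition jacobson :: "'a::ring_1 itself \<Rightarrow> 'a set" where
  "jacobson (_ :: 'a itself) = \<Inter> {I :: 'a set. maximal_left_ideal I}"

definition local_ring :: "'a::ring_1 itself \<Rightarrow> bool" where
  "local_ring (_ :: 'a itself) \<longleftrightarrow> (\<exists>!I :: 'a set. maximal_left_ideal I)"

end

theory Submission
  imports Defs
begin

text \<open>Without nontrivial idempotents, \<open>a\<close> is strongly weakly nil-clean iff one of \<open>a\<close>,
  \<open>a - 1\<close>, \<open>a + 1\<close> is nilpotent; as \<open>1 - q\<close> is a unit for nilpotent \<open>q\<close>, the GSWNC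
  property says exactly that every non-unit is nilpotent.

  If every non-unit is nilpotent, a left invertible element is a unit, since a nilpotent
  element of a nonzero ring has no one-sided inverse. Hence the non-units are closed under
  addition and left multiplication; they form a left ideal containing every proper one, so
  it is the unique maximal left ideal and equals \<open>J(R)\<close>. Conversely, let \<open>M\<close> be a nil
  maximal left ideal. If \<open>a\<close> has no left inverse, then \<open>R a + M\<close> is proper (from
  \<open>1 = r a + m\<close> the element \<open>r a = 1 - m\<close> would be a unit), so \<open>a \<in> M\<close>. A non-unit \<open>a\<close>
  with a left inverse \<open>s\<close> is impossible: \<open>s\<close> has no left inverse (it would equal \<open>a\<close>), so
  \<open>s \<in> M\<close> is nilpotent, yet right invertible.\<close>

lemma one_diff_mult_sum_powers: "(1 - x) * (\<Sum>i<n. x ^ i) = 1 - (x::'a::ring_1) ^ n"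
proof (induction n)
  case (Suc n)
  then show ?case by (simp add: distrib_left left_diff_distrib)
qed simp

lemma mult_sum_powers_commute: "x * (\<Sum>i<n. x ^ i) = (\<Sum>i<n. x ^ i) * (x::'a::ring_1)"
  by (simp add: sum_distrib_left sum_distrib_right power_commutes)

lemma sum_powers_mult_one_diff: "(\<Sum>i<n. x ^ i) * (1 - x) = 1 - (x::'a::ring_1) ^ n"
  using one_diff_mult_sum_powers[of x n] mult_sum_powers_commute[of x n]
  by (simp add: left_diff_distrib right_diff_distrib)

lemma is_unit_one [simp]: "is_unit (1::'a::ring_1)"
  unfolding is_unit_def by auto

lemma is_unit_minus: "is_unit (u::'a::ring_1) \<Longrightarrow> is_unit (- u)"
  unfolding is_unit_def by (metis minus_mult_minus)

lemma is_unit_minus_iff [simp]: "is_unit (- u) \<longleftrightarrow> is_unit (u::'a::ring_1)"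
  using is_unit_minus[of u] is_unit_minus[of "- u"] by auto

lemma is_nilp_minus: "is_nilp (q::'a::ring_1) \<Longrightarrow> is_nilp (- q)"
  unfolding is_nilp_def by (metis mult_zero_right power_minus)

lemma is_unit_one_diff_nilp:
  assumes "is_nilp (q::'a::ring_1)"
  shows "is_unit (1 - q)"
proof -
  obtain n where "q ^ n = 0" using assms unfolding is_nilp_def by blast
  then show ?thesis
    unfolding is_unit_def
    using one_diff_mult_sum_powers[of q n] sum_powers_mult_one_diff[of q n] by auto
qed

lemma left_inverse_power: "s * x = 1 \<Longrightarrow> s ^ n * (x::'a::ring_1) ^ n = 1"
proof (induction n)
  case (Suc n)
  have "s ^ Suc n * x ^ Suc n = s ^ n * (s * x) * x ^ n"
    by (simp only: power_Suc2[of s] power_Suc[of x] mult.assoc)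
  then show ?case using Suc by simp
qed simp

lemma nilp_left_invertible_imp_trivial:
  assumes "is_nilp (x::'a::ring_1)" and "s * x = 1"
  shows "(0::'a) = 1"
proof -
  obtain n where "x ^ n = 0" using assms(1) unfolding is_nilp_def by blast
  with left_inverse_power[OF assms(2), of n] show ?thesis by simp
qed

lemma nilp_right_invertible_imp_trivial:
  assumes "is_nilp (x::'a::ring_1)" and "x * s = 1"
  shows "(0::'a) = 1"
proof -
  obtain n where "x ^ n = 0" using assms(1) unfolding is_nilp_def by blast
  with left_inverse_power[OF assms(2), of n] show ?thesis by simp
qed

lemma is_nilp_imp_strongly_weakly_nil_clean:
  "is_nilp (a::'a::ring_1) \<Longrightarrow> strongly_weakly_nil_clean a"
  unfolding strongly_weakly_nil_clean_def is_idem_def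
  by (rule exI[of _ 0], rule exI[of _ a]) simp

lemma strongly_weakly_nil_clean_trivial_idems:
  assumes idems: "\<forall>e::'a::ring_1. is_idem e \<longrightarrow> e = 0 \<or> e = 1"
    and "strongly_weakly_nil_clean (a::'a)"
  shows "is_nilp a \<or> is_nilp (a - 1) \<or> is_nilp (a + 1)"
proof -
  obtain e q where "is_idem e" "is_nilp q" "a = q + e \<or> a = q - e"
    using assms(2) unfolding strongly_weakly_nil_clean_def by blast
  moreover have "e = 0 \<or> e = 1" using idems \<open>is_idem e\<close> by blast
  ultimately have "a = q \<or> a - 1 = q \<or> a + 1 = q" by auto
  then show ?thesis using \<open>is_nilp q\<close> by blast
qed

lemma GSWNC_iff_nonunits_nilp:
  assumes idems: "\<forall>e::'a::ring_1. is_idem e \<longrightarrow> e = 0 \<or> e = 1"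
  shows "GSWNC TYPE('a) \<longleftrightarrow> (\<forall>a::'a. \<not> is_unit a \<longrightarrow> is_nilp a)"
proof
  assume GSWNC: "GSWNC TYPE('a)"
  show "\<forall>a::'a. \<not> is_unit a \<longrightarrow> is_nilp a"
  proof (intro allI impI)
    fix a :: 'a
    assume nonunit: "\<not> is_unit a"
    have "is_unit a" if "is_nilp (a - 1)"
    proof -
      have "is_unit (1 - - (a - 1))" using that by (intro is_unit_one_diff_nilp is_nilp_minus)
      then show ?thesis by simp
    qed
    moreover have "is_unit a" if "is_nilp (a + 1)"
    proof -
      have "is_unit (- (1 - (a + 1)))" using that by (intro is_unit_minus is_unit_one_diff_nilp)
      then show ?thesis by simp
    qed
    ultimately show "is_nilp a"
      using nonunit GSWNC strongly_weakly_nil_clean_trivial_idems[OF idems]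
      unfolding GSWNC_def by blast
  qed
next
  assume "\<forall>a::'a. \<not> is_unit a \<longrightarrow> is_nilp a"
  then show "GSWNC TYPE('a)"
    unfolding GSWNC_def by (blast intro: is_nilp_imp_strongly_weakly_nil_clean)
qed

lemma left_ideal_eq_UNIV_if_left_invertible:
  assumes "left_ideal K" and "x \<in> K" and "v * x = 1"
  shows "K = UNIV"
proof -
  have "1 \<in> K" using assms unfolding left_ideal_def by metis
  then have "r * 1 \<in> K" for r using assms(1) unfolding left_ideal_def by blast
  then show ?thesis by auto
qed

lemma maximal_left_ideals_eq_nonunits:
  assumes "left_ideal {a::'a::ring_1. \<not> is_unit a}"
  shows "{I. maximal_left_ideal I} = {{a::'a. \<not> is_unit a}}"
proof -
  have "K \<subseteq> {a. \<not> is_unit a}" if "left_ideal K" "K \<noteq> UNIV" for K :: "'a set"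
    using that left_ideal_eq_UNIV_if_left_invertible unfolding is_unit_def by blast
  moreover have "{a::'a. \<not> is_unit a} \<noteq> UNIV" using is_unit_one by blast
  ultimately show ?thesis using assms unfolding maximal_left_ideal_def by blast
qed

lemma jacobson_eq_unique_maximal_left_ideal:
  "{I. maximal_left_ideal I} = {M} \<Longrightarrow> jacobson TYPE('a::ring_1) = M"
  unfolding jacobson_def by simp

lemma local_ring_iff_unique_maximal_left_ideal:
  "local_ring TYPE('a::ring_1) \<longleftrightarrow> (\<exists>M. {I::'a set. maximal_left_ideal I} = {M})"
  unfolding local_ring_def by (auto simp: Ex1_def)

lemma left_ideal_nonunits_if_nonunits_nilp:
  assumes nontriv: "(0::'a::ring_1) \<noteq> 1"
    and nonunits_nilp: "\<forall>a::'a. \<not> is_unit a \<longrightarrow> is_nilp a"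
  shows "left_ideal {a::'a. \<not> is_unit a}"
proof -
  have left_invertible_unit: "is_unit a" if "s * a = 1" for s a :: 'a
    using that nonunits_nilp nilp_left_invertible_imp_trivial nontriv by blast
  have "is_unit (r * a) \<Longrightarrow> is_unit a" for r a :: 'a
    using left_invertible_unit[of _ a] unfolding is_unit_def by (metis mult.assoc)
  moreover have "is_unit (a + b) \<Longrightarrow> is_unit a \<or> is_unit b" for a b :: 'a
  proof -
    assume "is_unit (a + b)"
    then obtain v where v: "v * (a + b) = 1" unfolding is_unit_def by blast
    show "is_unit a \<or> is_unit b"
    proof (cases "is_unit (v * a)")
      case True
      then show ?thesis
        using left_invertible_unit[of _ a] unfolding is_unit_def by (metis mult.assoc)
    next
      case False
      then have "is_unit (1 - v * a)" using nonunits_nilp is_unit_one_diff_nilp by blast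
      moreover have "1 - v * a = v * b" using v by (simp add: algebra_simps)
      ultimately have "is_unit (v * b)" by simp
      then show ?thesis
        using left_invertible_unit[of _ b] unfolding is_unit_def by (metis mult.assoc)
    qed
  qed
  moreover have "\<not> is_unit (0::'a)" using nontriv unfolding is_unit_def by simp
  ultimately show ?thesis
    unfolding left_ideal_def mem_Collect_eq is_unit_minus_iff by blast
qed

lemma left_ideal_left_multiples_plus:
  assumes "left_ideal M"
  shows "left_ideal {r * a + m | r m. m \<in> M}"
  unfolding left_ideal_def
proof (intro conjI ballI allI)
  have "0 \<in> M" "(0::'a) = 0 * a + 0" using assms unfolding left_ideal_def by simp_all
  then show "0 \<in> {r * a + m | r m. m \<in> M}" by blast
next
  fix x y assume "x \<in> {r * a + m | r m. m \<in> M}" "y \<in> {r * a + m | r m. m \<in> M}"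
  then obtain r m r' m' where "x = r * a + m" "y = r' * a + m'" "m \<in> M" "m' \<in> M"
    by blast
  moreover have "m + m' \<in> M" using assms calculation unfolding left_ideal_def by blast
  moreover have "x + y = (r + r') * a + (m + m')"
    using calculation by (simp add: algebra_simps)
  ultimately show "x + y \<in> {r * a + m | r m. m \<in> M}" by blast
next
  fix x assume "x \<in> {r * a + m | r m. m \<in> M}"
  then obtain r m where "x = r * a + m" "m \<in> M" by blast
  moreover have "- m \<in> M" using assms calculation unfolding left_ideal_def by blast
  moreover have "- x = (- r) * a + (- m)" using calculation by simp
  ultimately show "- x \<in> {r * a + m | r m. m \<in> M}" by blast
next
  fix t x assume "x \<in> {r * a + m | r m. m \<in> M}"
  then obtain r m where "x = r * a + m" "m \<in> M" by blast
  moreover have "t * m \<in> M" using assms calculation unfolding left_ideal_def by blast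
  moreover have "t * x = (t * r) * a + t * m"
    using calculation by (simp add: algebra_simps)
  ultimately show "t * x \<in> {r * a + m | r m. m \<in> M}" by blast
qed

lemma mem_nil_maximal_left_ideal_if_not_left_invertible:
  assumes maximal: "maximal_left_ideal M"
    and nil: "\<forall>x\<in>M. is_nilp x"
    and not_left_invertible: "\<forall>s. s * a \<noteq> (1::'a::ring_1)"
  shows "a \<in> M"
proof -
  define K where "K = {r * a + m | r m. m \<in> M}"
  have "left_ideal M" using maximal unfolding maximal_left_ideal_def by blast
  then have "left_ideal K" unfolding K_def by (rule left_ideal_left_multiples_plus)
  have "0 \<in> M" using \<open>left_ideal M\<close> unfolding left_ideal_def by blast
  have "M \<subseteq> K"
  proof
    fix m assume "m \<in> M"
    moreover have "m = 0 * a + m" by simp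
    ultimately show "m \<in> K" unfolding K_def by blast
  qed
  have "a = 1 * a + 0" by simp
  with \<open>0 \<in> M\<close> have "a \<in> K" unfolding K_def by blast
  have "K \<noteq> UNIV"
  proof
    assume "K = UNIV"
    then obtain r m where "1 = r * a + m" "m \<in> M" unfolding K_def by blast
    then have "r * a = 1 - m" by (simp add: algebra_simps)
    moreover obtain w where "w * (1 - m) = 1"
      using nil \<open>m \<in> M\<close> is_unit_one_diff_nilp unfolding is_unit_def by blast
    ultimately have "(w * r) * a = 1" by (simp add: mult.assoc)
    then show False using not_left_invertible by blast
  qed
  then have "K = M"
    using maximal \<open>left_ideal K\<close> \<open>M \<subseteq> K\<close> unfolding maximal_left_ideal_def by blast
  with \<open>a \<in> K\<close> show "a \<in> M" by simp
qed

lemma nonunits_nilp_if_nil_maximal_left_ideal: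
  assumes nontriv: "(0::'a::ring_1) \<noteq> 1"
    and maximal: "maximal_left_ideal (M::'a set)"
    and nil: "\<forall>x\<in>M. is_nilp x"
    and nonunit: "\<not> is_unit (a::'a)"
  shows "is_nilp a"
proof (cases "\<exists>s. s * a = 1")
  case True
  then obtain s where s: "s * a = 1" by blast
  show ?thesis
  proof (cases "\<exists>t. t * s = 1")
    case True
    then obtain t where "t * s = 1" by blast
    then have "t = a" using s by (metis mult.assoc mult_1_left mult_1_right)
    with \<open>t * s = 1\<close> s nonunit show ?thesis unfolding is_unit_def by blast
  next
    case False
    then have "s \<in> M"
      by (intro mem_nil_maximal_left_ideal_if_not_left_invertible[OF maximal nil]) blast
    then have "is_nilp s" using nil by blast
    with s nontriv show ?thesis using nilp_right_invertible_imp_trivial by blast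
  qed
next
  case False
  then have "a \<in> M"
    by (intro mem_nil_maximal_left_ideal_if_not_left_invertible[OF maximal nil]) blast
  then show ?thesis using nil by blast
qed

lemma nonunits_nilp_iff_local_nil_jacobson:
  assumes nontriv: "(0::'a::ring_1) \<noteq> 1"
  shows "(\<forall>a::'a. \<not> is_unit a \<longrightarrow> is_nilp a) \<longleftrightarrow>
           (local_ring TYPE('a) \<and> (\<forall>x \<in> jacobson TYPE('a). is_nilp x))"
proof
  assume nonunits_nilp: "\<forall>a::'a. \<not> is_unit a \<longrightarrow> is_nilp a"
  have "{I. maximal_left_ideal I} = {{a::'a. \<not> is_unit a}}"
    using maximal_left_ideals_eq_nonunits left_ideal_nonunits_if_nonunits_nilp[OF nontriv nonunits_nilp]
    by blast
  then show "local_ring TYPE('a) \<and> (\<forall>x \<in> jacobson TYPE('a). is_nilp x)"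
    using nonunits_nilp jacobson_eq_unique_maximal_left_ideal
      local_ring_iff_unique_maximal_left_ideal by blast
next
  assume local_nil: "local_ring TYPE('a) \<and> (\<forall>x \<in> jacobson TYPE('a). is_nilp x)"
  then obtain M :: "'a set" where M: "{I. maximal_left_ideal I} = {M}"
    using local_ring_iff_unique_maximal_left_ideal by blast
  then have "jacobson TYPE('a) = M" by (rule jacobson_eq_unique_maximal_left_ideal)
  then have nil: "\<forall>x\<in>M. is_nilp x" using local_nil by simp
  have maximal: "maximal_left_ideal M" using M by blast
  show "\<forall>a::'a. \<not> is_unit a \<longrightarrow> is_nilp a"
    using nonunits_nilp_if_nil_maximal_left_ideal[OF nontriv maximal nil] by blast
qed

theorem corollary2p50:
  assumes nontriv: "(0::'a::ring_1) \<noteq> 1"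
    and idems: "\<forall>e::'a. is_idem e \<longrightarrow> e = 0 \<or> e = 1"
  shows "GSWNC TYPE('a) \<longleftrightarrow>
           (local_ring TYPE('a) \<and> (\<forall>x \<in> jacobson TYPE('a). is_nilp x))"
  using GSWNC_iff_nonunits_nilp[OF idems] nonunits_nilp_iff_local_nil_jacobson[OF nontriv]
  by simp

end
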